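(* If $mG$ is a finite canonical misinformation game, then the terminal set $\mathcal{T}$ of the Adaptation Procedure on $mG$ is nonempty.
   Context: A normal-form game is $G=\langle N,S,P\rangle$ with finite players $N$, finite pure strategy sets $S_i$, positions $S=\times_i S_i$, payoffs $P_i:S\to\mathbb{R}$. A misinformation game $mG=\langle G^0,G^1,\dots,G^{|N|}\rangle$ consists of the actual game $G^0$ and subjective games $G^i$; it is canonical if all $G^i=\langle N,S,P^i\rangle$ differ from $G^0$ only in payoffs and in every $G^i$ all players have equally many pure strategies. $NME(mG)$ is the set of profiles $\sigma=(\sigma_1,\dots,\sigma_{|N|})$ such that each $\sigma_i$ is player $i$'s component of some Nash equilibrium of $G^i$. $\chi(\sigma)=\mathrm{supp}(\sigma_1)\times\dots\times\mathrm{supp}(\sigma_{|N|})$. For $\vec v\in S$, $mG_{\vec v}$ is obtained by replacing, in every $P^i$ ($i\ge1$), the payoff vector at position $\vec v$ by $P^0(\vec v)$. For a set $M$ of misinformation games, $\mathcal{AD}(M)=\{mG_{\vec u}: mG\in M,\sigma\in NME(mG),\vec u\in\chi(\sigma)\}$, $\mathcal{AD}^{(0)}(M)=M$, $\mathcal{AD}^{(t+1)}(M)=\mathcal{AD}^{(t)}(\mathcal{AD}(M))$, $\mathcal{AD}^*(M)=\bigcup_{t\ge0}\mathcal{AD}^{(t)}(M)$. The terminal set of the Adaptation Procedure on $mG$ is $\mathcal{T}=\{mG'\in\mathcal{AD}^*(\{mG\}): mG'\in\mathcal{AD}(\{mG'\})\}$. *)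

theory Defs
  imports Complex_Main "HOL-Library.FuncSet"
begin

(* Players are 0..<n; player i has the finite nonempty pure strategy set S i.
   A position is an element of PiE {..<n} S.
   A payoff function maps a position and a player to a real number. *)

type_synonym 's payoff = "(nat \<Rightarrow> 's) \<Rightarrow> nat \<Rightarrow> real"

(* A canonical misinformation game over (n, S): the actual payoffs P^0 and,
   for each player i < n, the subjective payoffs P^i; all games share players
   and strategy sets, so only payoffs are stored. *)
type_synonym 's mgame = "'s payoff \<times> (nat \<Rightarrow> 's payoff)"

definition positions :: "nat \<Rightarrow> (nat \<Rightarrow> 's set) \<Rightarrow> (nat \<Rightarrow> 's) set" where
  "positions n S = PiE {..<n} S"

definition mixed_strategy :: "'s set \<Rightarrow> ('s \<Rightarrow> real) \<Rightarrow> bool" where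
  "mixed_strategy A p \<longleftrightarrow> (\<forall>s. 0 \<le> p s) \<and> (\<forall>s. s \<notin> A \<longrightarrow> p s = 0) \<and> sum p A = 1"

definition mixed_profile :: "nat \<Rightarrow> (nat \<Rightarrow> 's set) \<Rightarrow> (nat \<Rightarrow> 's \<Rightarrow> real) \<Rightarrow> bool" where
  "mixed_profile n S \<sigma> \<longleftrightarrow> (\<forall>i<n. mixed_strategy (S i) (\<sigma> i))"

definition exp_payoff :: "nat \<Rightarrow> (nat \<Rightarrow> 's set) \<Rightarrow> 's payoff \<Rightarrow> (nat \<Rightarrow> 's \<Rightarrow> real) \<Rightarrow> nat \<Rightarrow> real" where
  "exp_payoff n S P \<sigma> j = (\<Sum>v\<in>positions n S. (\<Prod>i<n. \<sigma> i (v i)) * P v j)"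

definition nash_eq :: "nat \<Rightarrow> (nat \<Rightarrow> 's set) \<Rightarrow> 's payoff \<Rightarrow> (nat \<Rightarrow> 's \<Rightarrow> real) \<Rightarrow> bool" where
  "nash_eq n S P \<sigma> \<longleftrightarrow> mixed_profile n S \<sigma> \<and>
     (\<forall>j<n. \<forall>\<tau>. mixed_strategy (S j) \<tau> \<longrightarrow>
        exp_payoff n S P (\<sigma>(j := \<tau>)) j \<le> exp_payoff n S P \<sigma> j)"

definition NME :: "nat \<Rightarrow> (nat \<Rightarrow> 's set) \<Rightarrow> 's mgame \<Rightarrow> (nat \<Rightarrow> 's \<Rightarrow> real) set" where
  "NME n S mG = {\<sigma>. \<forall>i<n. \<exists>\<tau>. nash_eq n S (snd mG i) \<tau> \<and> \<sigma> i = \<tau> i}"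

definition chi :: "nat \<Rightarrow> (nat \<Rightarrow> 's \<Rightarrow> real) \<Rightarrow> (nat \<Rightarrow> 's) set" where
  "chi n \<sigma> = PiE {..<n} (\<lambda>i. {s. \<sigma> i s \<noteq> 0})"

definition adapt :: "nat \<Rightarrow> 's mgame \<Rightarrow> (nat \<Rightarrow> 's) \<Rightarrow> 's mgame" where
  "adapt n mG v = (fst mG, \<lambda>i. if i < n then (snd mG i)(v := fst mG v) else snd mG i)"

definition AD :: "nat \<Rightarrow> (nat \<Rightarrow> 's set) \<Rightarrow> 's mgame set \<Rightarrow> 's mgame set" where
  "AD n S M = {adapt n mG u | mG \<sigma> u. mG \<in> M \<and> \<sigma> \<in> NME n S mG \<and> u \<in> chi n \<sigma>}"

definition AD_star :: "nat \<Rightarrow> (nat \<Rightarrow> 's set) \<Rightarrow> 's mgame set \<Rightarrow> 's mgame set" where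
  "AD_star n S M = (\<Union>t. (AD n S ^^ t) M)"

definition terminal_set :: "nat \<Rightarrow> (nat \<Rightarrow> 's set) \<Rightarrow> 's mgame \<Rightarrow> 's mgame set" where
  "terminal_set n S mG = {mG' \<in> AD_star n S {mG}. mG' \<in> AD n S {mG'}}"

end

theory Submission
  imports Defs "HOL-Analysis.Analysis"
begin

text \<open>Every subjective game is a finite normal-form game, so it has a mixed Nash equilibrium;
  hence every misinformation game has a natural misinformed equilibrium \<open>\<sigma>\<close>, and adapting at
  any position of \<open>\<chi>(\<sigma>)\<close> is a step of the procedure. Such a step either leaves the game
  unchanged, which makes it terminal, or corrects one of the finitely many positions at which
  some subjective payoff differs from the actual one. So the number of these positions decreases
  until a terminal game is reached.

  Nash's theorem is proved with Nash's map and Brouwer's theorem for a cube \<open>[0,1]\<^sup>D\<close>, \<open>D\<close> a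
  finite set. The Brouwer theorem of HOL-Analysis is stated for \<open>euclidean_space\<close> types,
  whose dimension cannot depend on \<open>D\<close>, so the cube version is derived from the
  combinatorial \<open>kuhn_lemma\<close> by the usual limit argument.\<close>

definition unit_cube :: "'a set \<Rightarrow> ('a \<Rightarrow> real) set" where
  "unit_cube D = {x. \<forall>d\<in>D. x d \<in> {0..1}}"

definition cube_seq_continuous :: "'a set \<Rightarrow> (('a \<Rightarrow> real) \<Rightarrow> 'a \<Rightarrow> real) \<Rightarrow> bool" where
  "cube_seq_continuous D f \<longleftrightarrow>
     (\<forall>X x. range X \<subseteq> unit_cube D \<longrightarrow> x \<in> unit_cube D \<longrightarrow> (\<forall>d\<in>D. (\<lambda>k. X k d) \<longlonglongrightarrow> x d)
        \<longrightarrow> (\<forall>d\<in>D. (\<lambda>k. f (X k) d) \<longlonglongrightarrow> f x d))"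

lemma cube_seq_continuousD:
  assumes "cube_seq_continuous D f" "range X \<subseteq> unit_cube D" "x \<in> unit_cube D"
    and "\<And>d. d \<in> D \<Longrightarrow> (\<lambda>k. X k d) \<longlonglongrightarrow> x d" "d \<in> D"
  shows "(\<lambda>k. f (X k) d) \<longlonglongrightarrow> f x d"
  using assms unfolding cube_seq_continuous_def by blast

lemma unit_cube_seq_compact:
  fixes Z :: "nat \<Rightarrow> nat \<Rightarrow> real"
  assumes "range Z \<subseteq> unit_cube {..<N}"
  shows "\<exists>\<phi> z. strict_mono \<phi> \<and> z \<in> unit_cube {..<N} \<and> (\<forall>j<N. (\<lambda>k. Z (\<phi> k) j) \<longlonglongrightarrow> z j)"
  using assms
proof (induction N)
  case 0
  show ?case by (rule exI[of _ id]) (auto simp: strict_mono_def unit_cube_def)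
next
  case (Suc N)
  have "range Z \<subseteq> unit_cube {..<N}" using Suc.prems by (auto simp: unit_cube_def)
  then obtain \<phi> z where \<phi>: "strict_mono \<phi>" "z \<in> unit_cube {..<N}"
    and lim: "\<forall>j<N. (\<lambda>k. Z (\<phi> k) j) \<longlonglongrightarrow> z j"
    using Suc.IH by blast
  have "\<forall>k. Z (\<phi> k) N \<in> {0..1}" using Suc.prems by (auto simp: unit_cube_def)
  then obtain l r where l: "l \<in> {0..1}" and r: "strict_mono r" "((\<lambda>k. Z (\<phi> k) N) \<circ> r) \<longlonglongrightarrow> l"
    using compact_imp_seq_compact[OF compact_Icc] by (metis seq_compactE)
  have "(\<lambda>k. Z ((\<phi> \<circ> r) k) j) \<longlonglongrightarrow> (z(N := l)) j" if "j < Suc N" for j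
  proof (cases "j = N")
    case True
    then show ?thesis using r(2) by (simp add: o_def)
  next
    case False
    then show ?thesis
      using LIMSEQ_subseq_LIMSEQ[OF lim[rule_format] r(1)] that by (simp add: o_def)
  qed
  moreover have "z(N := l) \<in> unit_cube {..<Suc N}"
    using \<phi>(2) l by (auto simp: unit_cube_def less_Suc_eq)
  ultimately show ?case using strict_mono_o[OF \<phi>(1) r(1)] by blast
qed

definition grid_point :: "nat \<Rightarrow> (nat \<Rightarrow> nat) \<Rightarrow> nat \<Rightarrow> real" where
  "grid_point p q = (\<lambda>j. real (q j) / real p)"

lemma grid_point_in_unit_cube:
  assumes "0 < p" "\<forall>j<N. q j \<le> p"
  shows "grid_point p q \<in> unit_cube {..<N}"
  using assms by (auto simp: grid_point_def unit_cube_def divide_le_eq_1)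

definition sign_change_cell ::
    "nat \<Rightarrow> ((nat \<Rightarrow> real) \<Rightarrow> nat \<Rightarrow> real) \<Rightarrow> nat \<Rightarrow> (nat \<Rightarrow> nat) \<Rightarrow> (nat \<Rightarrow> nat \<Rightarrow> nat) \<Rightarrow> (nat \<Rightarrow> nat \<Rightarrow> nat) \<Rightarrow> bool"
  where "sign_change_cell N f p q r s \<longleftrightarrow> (\<forall>i<N. q i < p) \<and>
    (\<forall>j<N. \<forall>i<N. q i \<le> r j i \<and> r j i \<le> q i + 1 \<and> q i \<le> s j i \<and> s j i \<le> q i + 1) \<and>
    (\<forall>j<N. (grid_point p (r j) j - f (grid_point p (r j)) j)
            * (grid_point p (s j) j - f (grid_point p (s j)) j) \<le> 0)"

definition kuhn_label :: "((nat \<Rightarrow> real) \<Rightarrow> nat \<Rightarrow> real) \<Rightarrow> nat \<Rightarrow> (nat \<Rightarrow> nat) \<Rightarrow> nat \<Rightarrow> nat" where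
  "kuhn_label f p y j =
     (if y j \<noteq> p \<and> (y j = 0 \<or> grid_point p y j \<le> f (grid_point p y) j) then 0 else 1)"

lemma kuhn_label_sign_change:
  fixes f :: "(nat \<Rightarrow> real) \<Rightarrow> nat \<Rightarrow> real" and N :: nat
  assumes "0 < p" and maps: "f ` unit_cube {..<N} \<subseteq> unit_cube {..<N}" and "j < N"
    and y: "\<forall>i<N. y i \<le> p" and y': "\<forall>i<N. y' i \<le> p"
    and labels: "kuhn_label f p y j \<noteq> kuhn_label f p y' j"
  shows "(grid_point p y j - f (grid_point p y) j) * (grid_point p y' j - f (grid_point p y') j) \<le> 0"
proof -
  let ?x = "grid_point p"
  have f_cube: "f (?x v) j \<in> {0..1}" if "\<forall>i<N. v i \<le> p" for v
    using maps grid_point_in_unit_cube[OF \<open>0 < p\<close> that] \<open>j < N\<close> by (auto simp: unit_cube_def)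
  have label0: "?x v j \<le> f (?x v) j" if "kuhn_label f p v j = 0" "\<forall>i<N. v i \<le> p" for v
    using that f_cube[OF that(2)] by (auto simp: kuhn_label_def grid_point_def split: if_splits)
  have label1: "f (?x v) j \<le> ?x v j" if "kuhn_label f p v j = 1" "\<forall>i<N. v i \<le> p" for v
    using that f_cube[OF that(2)] \<open>0 < p\<close> by (auto simp: kuhn_label_def grid_point_def split: if_splits)
  consider "kuhn_label f p y j = 0" "kuhn_label f p y' j = 1" | "kuhn_label f p y j = 1" "kuhn_label f p y' j = 0"
    using labels by (auto simp: kuhn_label_def split: if_splits)
  then show ?thesis
  proof cases
    case 1
    then show ?thesis using label0 label1 y y' by (intro mult_nonpos_nonneg) auto
  next
    case 2
    then show ?thesis using label0 label1 y y' by (intro mult_nonneg_nonpos) auto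
  qed
qed

lemma kuhn_sign_change_cell:
  fixes f :: "(nat \<Rightarrow> real) \<Rightarrow> nat \<Rightarrow> real" and N :: nat
  assumes "0 < p" and maps: "f ` unit_cube {..<N} \<subseteq> unit_cube {..<N}"
  shows "\<exists>q r s. sign_change_cell N f p q r s"
proof -
  let ?x = "grid_point p" and ?label = "kuhn_label f p"
  have "\<forall>y. (\<forall>i<N. y i \<le> p) \<longrightarrow> (\<forall>i<N. ?label y i = 0 \<or> ?label y i = 1)"
    "\<forall>y. (\<forall>i<N. y i \<le> p) \<longrightarrow> (\<forall>i<N. y i = 0 \<longrightarrow> ?label y i = 0)"
    "\<forall>y. (\<forall>i<N. y i \<le> p) \<longrightarrow> (\<forall>i<N. y i = p \<longrightarrow> ?label y i = 1)"
    using \<open>0 < p\<close> by (simp_all add: kuhn_label_def)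
  then obtain q where q: "\<forall>i<N. q i < p" and "\<forall>j<N. \<exists>r s.
      (\<forall>i<N. q i \<le> r i \<and> r i \<le> q i + 1) \<and> (\<forall>i<N. q i \<le> s i \<and> s i \<le> q i + 1) \<and> ?label r j \<noteq> ?label s j"
    by (rule kuhn_lemma[OF \<open>0 < p\<close>])
  then obtain r s where rs: "\<forall>j<N. (\<forall>i<N. q i \<le> r j i \<and> r j i \<le> q i + 1)
      \<and> (\<forall>i<N. q i \<le> s j i \<and> s j i \<le> q i + 1) \<and> ?label (r j) j \<noteq> ?label (s j) j"
    by metis
  have corners: "\<forall>j<N. \<forall>i<N. q i \<le> r j i \<and> r j i \<le> q i + 1 \<and> q i \<le> s j i \<and> s j i \<le> q i + 1"
    using rs by blast
  have "\<forall>j<N. (?x (r j) j - f (?x (r j)) j) * (?x (s j) j - f (?x (s j)) j) \<le> 0"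
  proof (intro allI impI)
    fix j assume "j < N"
    have "r j i \<le> p \<and> s j i \<le> p" if "i < N" for i
    proof -
      have "q i < p" "r j i \<le> q i + 1" "s j i \<le> q i + 1" using corners q \<open>j < N\<close> that by blast+
      then show ?thesis by linarith
    qed
    moreover have "?label (r j) j \<noteq> ?label (s j) j" using rs \<open>j < N\<close> by blast
    ultimately show "(?x (r j) j - f (?x (r j)) j) * (?x (s j) j - f (?x (s j)) j) \<le> 0"
      using kuhn_label_sign_change[OF \<open>0 < p\<close> maps \<open>j < N\<close>] by blast
  qed
  then have "sign_change_cell N f p q r s"
    unfolding sign_change_cell_def using q corners by (intro conjI)
  then show ?thesis by (intro exI)
qed

lemma grid_point_neighbour_tendsto:
  assumes "(\<lambda>k. grid_point (p k) (a k) i) \<longlonglongrightarrow> z" "filterlim p at_top sequentially"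
    and "\<And>k. a k i \<le> b k i \<and> b k i \<le> a k i + 1"
  shows "(\<lambda>k. grid_point (p k) (b k) i) \<longlonglongrightarrow> z"
proof -
  have "(\<lambda>k. inverse (real (p k))) \<longlonglongrightarrow> 0"
    by (intro tendsto_inverse_0_at_top filterlim_compose[OF filterlim_real_sequentially assms(2)])
  then have "(\<lambda>k. real (b k i) / real (p k) - real (a k i) / real (p k)) \<longlonglongrightarrow> 0"
  proof (rule Lim_null_comparison[rotated], intro always_eventually allI)
    fix k
    have "norm (real (b k i) / real (p k) - real (a k i) / real (p k))
        = \<bar>real (b k i) - real (a k i)\<bar> / real (p k)"
      by (simp add: diff_divide_distrib[symmetric] abs_divide)
    also have "\<dots> \<le> 1 / real (p k)"
      using assms(3)[of k] by (intro divide_right_mono) linarith+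
    finally show "norm (real (b k i) / real (p k) - real (a k i) / real (p k)) \<le> inverse (real (p k))"
      by (simp add: inverse_eq_divide)
  qed
  from tendsto_add[OF this assms(1)[unfolded grid_point_def]] show ?thesis
    by (simp add: grid_point_def)
qed

lemma fixed_point_of_sign_changes:
  assumes cont: "cube_seq_continuous D f" and z: "z \<in> unit_cube D" and "j \<in> D"
    and A: "range A \<subseteq> unit_cube D" "\<And>d. d \<in> D \<Longrightarrow> (\<lambda>k. A k d) \<longlonglongrightarrow> z d"
    and B: "range B \<subseteq> unit_cube D" "\<And>d. d \<in> D \<Longrightarrow> (\<lambda>k. B k d) \<longlonglongrightarrow> z d"
    and sign: "\<And>k. (A k j - f (A k) j) * (B k j - f (B k) j) \<le> 0"
  shows "f z j = z j"
proof -
  have "(\<lambda>k. (A k j - f (A k) j) * (B k j - f (B k) j)) \<longlonglongrightarrow> (z j - f z j) * (z j - f z j)"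
    using cube_seq_continuousD[OF cont A(1) z A(2) \<open>j \<in> D\<close>]
      cube_seq_continuousD[OF cont B(1) z B(2) \<open>j \<in> D\<close>] A(2) B(2) \<open>j \<in> D\<close>
    by (intro tendsto_intros) auto
  then have "(z j - f z j) * (z j - f z j) \<le> 0"
    using sign by (intro LIMSEQ_le_const2) auto
  then have "(z j - f z j) * (z j - f z j) = 0"
    using zero_le_square[of "z j - f z j"] by linarith
  then show ?thesis by simp
qed

theorem unit_cube_fixed_point_nat:
  fixes f :: "(nat \<Rightarrow> real) \<Rightarrow> nat \<Rightarrow> real" and N :: nat
  assumes maps: "f ` unit_cube {..<N} \<subseteq> unit_cube {..<N}"
    and cont: "cube_seq_continuous {..<N} f"
  shows "\<exists>z\<in>unit_cube {..<N}. \<forall>j<N. f z j = z j"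
proof -
  have "\<forall>k. \<exists>q r s. sign_change_cell N f (Suc k) q r s"
    using kuhn_sign_change_cell[OF zero_less_Suc maps] by blast
  then obtain q r s where "\<And>k. sign_change_cell N f (Suc k) (q k) (r k) (s k)"
    by metis
  then have q: "\<And>k. \<forall>i<N. q k i < Suc k"
    and cell: "\<And>k. \<forall>j<N. \<forall>i<N. q k i \<le> r k j i \<and> r k j i \<le> q k i + 1 \<and> q k i \<le> s k j i \<and> s k j i \<le> q k i + 1"
    and sign: "\<And>k. \<forall>j<N. (grid_point (Suc k) (r k j) j - f (grid_point (Suc k) (r k j)) j)
                * (grid_point (Suc k) (s k j) j - f (grid_point (Suc k) (s k j)) j) \<le> 0"
    unfolding sign_change_cell_def by blast+
  have "grid_point (Suc k) (q k) \<in> unit_cube {..<N}" for k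
    using q[of k] by (intro grid_point_in_unit_cube) auto
  then obtain \<phi> z where \<phi>: "strict_mono \<phi>" and z: "z \<in> unit_cube {..<N}"
    and lim: "\<forall>i<N. (\<lambda>k. grid_point (Suc (\<phi> k)) (q (\<phi> k)) i) \<longlonglongrightarrow> z i"
    using unit_cube_seq_compact[of "\<lambda>k. grid_point (Suc k) (q k)"] by blast
  have \<phi>_top: "filterlim (\<lambda>k. Suc (\<phi> k)) at_top sequentially"
    using filterlim_compose[OF filterlim_Suc filterlim_subseq[OF \<phi>]] by (simp add: o_def)
  have corner: "range (\<lambda>k. grid_point (Suc (\<phi> k)) (c k)) \<subseteq> unit_cube {..<N}
      \<and> (\<forall>i<N. (\<lambda>k. grid_point (Suc (\<phi> k)) (c k) i) \<longlonglongrightarrow> z i)"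
    if c: "\<And>k i. i < N \<Longrightarrow> q (\<phi> k) i \<le> c k i \<and> c k i \<le> q (\<phi> k) i + 1" for c
  proof (intro conjI allI impI)
    fix i assume "i < N"
    show "(\<lambda>k. grid_point (Suc (\<phi> k)) (c k) i) \<longlonglongrightarrow> z i"
      using grid_point_neighbour_tendsto[OF lim[rule_format, OF \<open>i < N\<close>] \<phi>_top] c[OF \<open>i < N\<close>] .
  next
    have "c k i \<le> Suc (\<phi> k)" if "i < N" for k i
      using c[OF that, of k] q[of "\<phi> k"] that by fastforce
    then show "range (\<lambda>k. grid_point (Suc (\<phi> k)) (c k)) \<subseteq> unit_cube {..<N}"
      by (auto intro: grid_point_in_unit_cube)
  qed
  have "f z j = z j" if "j < N" for j
  proof (rule fixed_point_of_sign_changes[OF cont z,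
        of j "\<lambda>k. grid_point (Suc (\<phi> k)) (r (\<phi> k) j)" "\<lambda>k. grid_point (Suc (\<phi> k)) (s (\<phi> k) j)"])
    show "(\<lambda>k. grid_point (Suc (\<phi> k)) (r (\<phi> k) j)) ` UNIV \<subseteq> unit_cube {..<N}"
      "\<And>i. i \<in> {..<N} \<Longrightarrow> (\<lambda>k. grid_point (Suc (\<phi> k)) (r (\<phi> k) j) i) \<longlonglongrightarrow> z i"
      using corner[of "\<lambda>k. r (\<phi> k) j"] cell that by auto
    show "(\<lambda>k. grid_point (Suc (\<phi> k)) (s (\<phi> k) j)) ` UNIV \<subseteq> unit_cube {..<N}"
      "\<And>i. i \<in> {..<N} \<Longrightarrow> (\<lambda>k. grid_point (Suc (\<phi> k)) (s (\<phi> k) j) i) \<longlonglongrightarrow> z i"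
      using corner[of "\<lambda>k. s (\<phi> k) j"] cell that by auto
  qed (use sign that in auto)
  then show ?thesis using z by blast
qed

theorem unit_cube_fixed_point:
  fixes f :: "('a \<Rightarrow> real) \<Rightarrow> 'a \<Rightarrow> real"
  assumes "finite D" and maps: "f ` unit_cube D \<subseteq> unit_cube D" and cont: "cube_seq_continuous D f"
  shows "\<exists>x\<in>unit_cube D. \<forall>d\<in>D. f x d = x d"
proof -
  obtain e where e: "bij_betw e {..<card D} D"
    using ex_bij_betw_nat_finite[OF \<open>finite D\<close>] by (auto simp: atLeast0LessThan)
  define e' where "e' = inv_into {..<card D} e"
  have e': "bij_betw e' D {..<card D}" "\<And>d. d \<in> D \<Longrightarrow> e (e' d) = d"
    using e bij_betw_inv_into[OF e] by (auto simp: e'_def bij_betw_inv_into_right)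
  define pull :: "(nat \<Rightarrow> real) \<Rightarrow> 'a \<Rightarrow> real" where "pull y = (\<lambda>d. y (e' d))" for y
  define g where "g y = (\<lambda>j. f (pull y) (e j))" for y
  have pull_cube: "pull y \<in> unit_cube D \<longleftrightarrow> y \<in> unit_cube {..<card D}" for y
    unfolding bij_betw_imp_surj_on[OF e'(1), symmetric] by (simp add: pull_def unit_cube_def)
  have "g y \<in> unit_cube {..<card D}" if "y \<in> unit_cube {..<card D}" for y
  proof -
    have "f (pull y) \<in> unit_cube D" using maps that pull_cube by blast
    then show ?thesis using e by (auto simp: g_def unit_cube_def bij_betw_def)
  qed
  then have "g ` unit_cube {..<card D} \<subseteq> unit_cube {..<card D}" by blast
  moreover have "cube_seq_continuous {..<card D} g"
    unfolding cube_seq_continuous_def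
  proof (intro allI impI ballI)
    fix Y y j
    assume Y: "range Y \<subseteq> unit_cube {..<card D}" and y: "y \<in> unit_cube {..<card D}"
      and lim: "\<forall>j\<in>{..<card D}. (\<lambda>k. Y k j) \<longlonglongrightarrow> y j" and j: "j \<in> {..<card D}"
    have "range (\<lambda>k. pull (Y k)) \<subseteq> unit_cube D" using Y pull_cube by blast
    moreover have "pull y \<in> unit_cube D" using y pull_cube by blast
    moreover have "\<And>d. d \<in> D \<Longrightarrow> (\<lambda>k. pull (Y k) d) \<longlonglongrightarrow> pull y d"
      using lim e'(1) by (auto simp: pull_def bij_betw_def)
    moreover have "e j \<in> D" using e j by (auto simp: bij_betw_def)
    ultimately show "(\<lambda>k. g (Y k) j) \<longlonglongrightarrow> g y j"
      unfolding g_def by (rule cube_seq_continuousD[OF cont])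
  qed
  ultimately obtain y where y: "y \<in> unit_cube {..<card D}" and fixed: "\<forall>j<card D. g y j = y j"
    using unit_cube_fixed_point_nat by blast
  have "f (pull y) d = pull y d" if "d \<in> D" for d
  proof -
    have "e' d < card D" using e'(1) that by (auto simp: bij_betw_def)
    then have "g y (e' d) = y (e' d)" using fixed by blast
    then show ?thesis using e'(2)[OF that] by (simp add: g_def pull_def)
  qed
  then show ?thesis using y pull_cube by blast
qed

lemma mixed_strategy_le_1:
  assumes "mixed_strategy A p" "finite A"
  shows "p s \<le> 1"
proof (cases "s \<in> A")
  case True
  then have "p s \<le> sum p A"
    using assms by (intro member_le_sum) (auto simp: mixed_strategy_def)
  then show ?thesis using assms(1) by (simp add: mixed_strategy_def)
qed (use assms in \<open>simp add: mixed_strategy_def\<close>)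

lemma mixed_strategy_support_nonempty:
  assumes "mixed_strategy A p"
  shows "\<exists>s\<in>A. p s \<noteq> 0"
  using assms unfolding mixed_strategy_def by (metis sum.neutral zero_neq_one)

lemma mixed_strategy_ex_support_le_average:
  assumes "mixed_strategy A p" "finite A"
  shows "\<exists>t\<in>A. p t \<noteq> 0 \<and> w t \<le> (\<Sum>s\<in>A. p s * w s)"
proof (rule ccontr)
  let ?avg = "\<Sum>s\<in>A. p s * w s"
  assume above: "\<not> ?thesis"
  obtain t where t: "t \<in> A" "p t \<noteq> 0" using mixed_strategy_support_nonempty[OF assms(1)] by blast
  have nonneg: "0 \<le> p s" for s using assms(1) by (simp add: mixed_strategy_def)
  have "(\<Sum>s\<in>A. p s * ?avg) < ?avg"
  proof (rule sum_strict_mono_ex1[OF assms(2)])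
    have above_avg: "?avg < w s" if "s \<in> A" "p s \<noteq> 0" for s
      using above that by auto
    then show "\<forall>s\<in>A. p s * ?avg \<le> p s * w s"
      using nonneg by (metis less_eq_real_def mult_left_mono mult_zero_left)
    have "0 < p t" using nonneg[of t] t(2) by linarith
    then show "\<exists>s\<in>A. p s * ?avg < p s * w s"
      using t by (intro bexI[of _ t] mult_strict_left_mono above_avg)
  qed
  moreover have "(\<Sum>s\<in>A. p s * ?avg) = ?avg"
    using assms(1) by (simp add: sum_distrib_right[symmetric] mixed_strategy_def)
  ultimately show False by simp
qed

locale finite_game =
  fixes n :: nat and S :: "nat \<Rightarrow> 's set"
  assumes finite_strategies: "i < n \<Longrightarrow> finite (S i)"
    and nonempty_strategies: "i < n \<Longrightarrow> S i \<noteq> {}"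
begin

lemma finite_positions: "finite (positions n S)"
  unfolding positions_def using finite_strategies by (intro finite_PiE) auto

lemma exp_payoff_deviation:
  assumes "j < n"
  shows "exp_payoff n S P (\<sigma>(j := \<tau>)) j = (\<Sum>t\<in>S j. \<tau> t * exp_payoff n S P (\<sigma>(j := indicator {t})) j)"
proof -
  define others where "others v = (\<Prod>i\<in>{..<n} - {j}. \<sigma> i (v i))" for v
  have prod: "(\<Prod>i<n. (\<sigma>(j := \<rho>)) i (v i)) = \<rho> (v j) * others v" for \<rho> v
  proof -
    have "(\<Prod>i<n. (\<sigma>(j := \<rho>)) i (v i)) = \<rho> (v j) * (\<Prod>i\<in>{..<n} - {j}. (\<sigma>(j := \<rho>)) i (v i))"
      using assms by (subst prod.remove[of _ j]) auto
    also have "(\<Prod>i\<in>{..<n} - {j}. (\<sigma>(j := \<rho>)) i (v i)) = others v"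
      unfolding others_def by (rule prod.cong) auto
    finally show ?thesis .
  qed
  have pick: "\<tau> (v j) = (\<Sum>t\<in>S j. \<tau> t * indicator {t} (v j))" if "v \<in> positions n S" for v
  proof -
    have "v j \<in> S j" using that assms by (auto simp: positions_def PiE_iff)
    then show ?thesis using finite_strategies[OF assms] by (simp add: indicator_def sum.delta)
  qed
  have "exp_payoff n S P (\<sigma>(j := \<tau>)) j
      = (\<Sum>v\<in>positions n S. \<Sum>t\<in>S j. \<tau> t * (indicator {t} (v j) * others v * P v j))"
    unfolding exp_payoff_def prod
    by (intro sum.cong refl) (simp add: pick sum_distrib_right mult.assoc)
  also have "\<dots> = (\<Sum>t\<in>S j. \<tau> t * (\<Sum>v\<in>positions n S. indicator {t} (v j) * others v * P v j))"
    by (subst sum.swap) (simp add: sum_distrib_left)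
  also have "\<dots> = (\<Sum>t\<in>S j. \<tau> t * exp_payoff n S P (\<sigma>(j := indicator {t})) j)"
    unfolding exp_payoff_def prod ..
  finally show ?thesis .
qed

lemma exp_payoff_tendsto:
  assumes "\<And>i s. (\<lambda>k. \<rho> k i s) \<longlonglongrightarrow> \<sigma> i s"
  shows "(\<lambda>k. exp_payoff n S P (\<rho> k) j) \<longlonglongrightarrow> exp_payoff n S P \<sigma> j"
  unfolding exp_payoff_def by (intro tendsto_intros assms)

definition gain :: "'s payoff \<Rightarrow> (nat \<Rightarrow> 's \<Rightarrow> real) \<Rightarrow> nat \<Rightarrow> 's \<Rightarrow> real" where
  "gain P \<sigma> i s = max 0 (exp_payoff n S P (\<sigma>(i := indicator {s})) i - exp_payoff n S P \<sigma> i)"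

lemma gain_nonneg: "0 \<le> gain P \<sigma> i s"
  by (simp add: gain_def)

lemma gain_tendsto:
  assumes "\<And>i s. (\<lambda>k. \<rho> k i s) \<longlonglongrightarrow> \<sigma> i s"
  shows "(\<lambda>k. gain P (\<rho> k) i s) \<longlonglongrightarrow> gain P \<sigma> i s"
proof -
  have "(\<lambda>k. ((\<rho> k)(i := indicator {s})) i' t) \<longlonglongrightarrow> (\<sigma>(i := indicator {s})) i' t" for i' t
    using assms by (cases "i' = i") auto
  then show ?thesis
    unfolding gain_def by (intro tendsto_intros exp_payoff_tendsto assms)
qed

lemma gain_eq_0_iff:
  "gain P \<sigma> i s = 0 \<longleftrightarrow> exp_payoff n S P (\<sigma>(i := indicator {s})) i \<le> exp_payoff n S P \<sigma> i"
  unfolding gain_def by linarith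

lemma no_gain_imp_nash_eq:
  assumes "mixed_profile n S \<sigma>" and no_gain: "\<And>i s. i < n \<Longrightarrow> s \<in> S i \<Longrightarrow> gain P \<sigma> i s = 0"
  shows "nash_eq n S P \<sigma>"
  unfolding nash_eq_def
proof (intro conjI allI impI assms(1))
  fix i \<tau> assume "i < n" and \<tau>: "mixed_strategy (S i) \<tau>"
  let ?u = "exp_payoff n S P \<sigma> i"
  have "exp_payoff n S P (\<sigma>(i := indicator {t})) i \<le> ?u" if "t \<in> S i" for t
    using no_gain[OF \<open>i < n\<close> that] by (simp only: gain_eq_0_iff)
  then have "exp_payoff n S P (\<sigma>(i := \<tau>)) i \<le> (\<Sum>t\<in>S i. \<tau> t * ?u)"
    unfolding exp_payoff_deviation[OF \<open>i < n\<close>, of P \<sigma> \<tau>]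
    using \<tau> by (intro sum_mono mult_left_mono) (auto simp: mixed_strategy_def)
  also have "\<dots> = ?u"
    using \<tau> by (simp add: sum_distrib_right[symmetric] mixed_strategy_def)
  finally show "exp_payoff n S P (\<sigma>(i := \<tau>)) i \<le> ?u" .
qed

lemma ex_support_without_gain:
  assumes "mixed_profile n S \<sigma>" "i < n"
  shows "\<exists>t\<in>S i. \<sigma> i t \<noteq> 0 \<and> gain P \<sigma> i t = 0"
proof -
  let ?w = "\<lambda>t. exp_payoff n S P (\<sigma>(i := indicator {t})) i"
  have mixed: "mixed_strategy (S i) (\<sigma> i)" using assms by (simp add: mixed_profile_def)
  have avg: "exp_payoff n S P \<sigma> i = (\<Sum>t\<in>S i. \<sigma> i t * ?w t)"
    using exp_payoff_deviation[OF \<open>i < n\<close>, of P \<sigma> "\<sigma> i"] by (simp only: fun_upd_triv)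
  obtain t where t: "t \<in> S i" "\<sigma> i t \<noteq> 0" "?w t \<le> (\<Sum>t\<in>S i. \<sigma> i t * ?w t)"
    using mixed_strategy_ex_support_le_average[OF mixed finite_strategies[OF \<open>i < n\<close>], of ?w] by blast
  then have "gain P \<sigma> i t = 0" unfolding gain_eq_0_iff avg by blast
  then show ?thesis using t by blast
qed

definition row_sum :: "(nat \<times> 's \<Rightarrow> real) \<Rightarrow> nat \<Rightarrow> real" where
  "row_sum x i = (\<Sum>t\<in>S i. x (i, t))"

definition row_deficit :: "(nat \<times> 's \<Rightarrow> real) \<Rightarrow> nat \<Rightarrow> real" where
  "row_deficit x i = max 0 (1 - row_sum x i)"

text \<open>A retraction of the nonnegative orthant onto the product of the players' simplices:
  each row is raised uniformly by its deficit below 1 and then normalised.\<close>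
definition to_profile :: "(nat \<times> 's \<Rightarrow> real) \<Rightarrow> nat \<Rightarrow> 's \<Rightarrow> real" where
  "to_profile x i s = (if i < n \<and> s \<in> S i
     then (x (i, s) + row_deficit x i) / (row_sum x i + real (card (S i)) * row_deficit x i) else 0)"

lemma row_normaliser_ge_1:
  assumes "i < n" "\<And>s. s \<in> S i \<Longrightarrow> 0 \<le> x (i, s)"
  shows "1 \<le> row_sum x i + real (card (S i)) * row_deficit x i"
proof -
  have card: "1 \<le> real (card (S i))"
    using finite_strategies[OF assms(1)] nonempty_strategies[OF assms(1)] by (simp add: Suc_leI card_gt_0_iff)
  show ?thesis
  proof (cases "1 \<le> row_sum x i")
    case False
    then have "0 \<le> (real (card (S i)) - 1) * (1 - row_sum x i)" using card by simp
    then show ?thesis using False by (simp add: row_deficit_def algebra_simps)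
  qed (simp add: row_deficit_def)
qed

lemma to_profile_mixed:
  assumes "\<And>d. d \<in> Sigma {..<n} S \<Longrightarrow> 0 \<le> x d"
  shows "mixed_profile n S (to_profile x)"
  unfolding mixed_profile_def mixed_strategy_def
proof (intro allI impI conjI)
  fix i s assume "i < n"
  define c where "c = row_sum x i + real (card (S i)) * row_deficit x i"
  have c: "1 \<le> c" unfolding c_def using row_normaliser_ge_1[OF \<open>i < n\<close>] assms \<open>i < n\<close> by blast
  show "0 \<le> to_profile x i s"
  proof (cases "s \<in> S i")
    case True
    have "0 \<le> x (i, s) + row_deficit x i"
      using assms True \<open>i < n\<close> by (simp add: row_deficit_def add_nonneg_nonneg)
    then show ?thesis using c True \<open>i < n\<close> by (simp add: to_profile_def c_def)
  qed (simp add: to_profile_def)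
  show "s \<notin> S i \<Longrightarrow> to_profile x i s = 0" by (simp add: to_profile_def)
  have "sum (to_profile x i) (S i) = (\<Sum>t\<in>S i. (x (i, t) + row_deficit x i) / c)"
    using \<open>i < n\<close> by (simp add: to_profile_def c_def)
  also have "\<dots> = c / c"
    by (simp add: c_def row_sum_def sum_divide_distrib[symmetric] sum.distrib)
  finally show "sum (to_profile x i) (S i) = 1" using c by simp
qed

lemma to_profile_eq:
  assumes "row_sum x i = 1" "i < n" "s \<in> S i"
  shows "to_profile x i s = x (i, s)"
  using assms by (simp add: to_profile_def row_deficit_def)

lemma to_profile_tendsto:
  assumes lim: "\<And>d. d \<in> Sigma {..<n} S \<Longrightarrow> (\<lambda>k. X k d) \<longlonglongrightarrow> x d"
    and nonneg: "\<And>d. d \<in> Sigma {..<n} S \<Longrightarrow> 0 \<le> x d"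
  shows "(\<lambda>k. to_profile (X k) i s) \<longlonglongrightarrow> to_profile x i s"
proof (cases "i < n \<and> s \<in> S i")
  case True
  have "(\<lambda>k. row_sum (X k) i) \<longlonglongrightarrow> row_sum x i"
    unfolding row_sum_def using True by (intro tendsto_intros lim) auto
  moreover have "row_sum x i + real (card (S i)) * row_deficit x i \<noteq> 0"
    using row_normaliser_ge_1[of i x] True nonneg by force
  ultimately have "(\<lambda>k. (X k (i, s) + row_deficit (X k) i) / (row_sum (X k) i + real (card (S i)) * row_deficit (X k) i))
      \<longlonglongrightarrow> (x (i, s) + row_deficit x i) / (row_sum x i + real (card (S i)) * row_deficit x i)"
    using True unfolding row_deficit_def by (intro tendsto_intros lim) auto
  then show ?thesis using True by (simp add: to_profile_def)
next
  case False
  then have "to_profile y i s = 0" for y by (auto simp: to_profile_def)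
  then show ?thesis by simp
qed

text \<open>The map of Nash's 1951 existence proof.\<close>
definition nash_map :: "'s payoff \<Rightarrow> (nat \<times> 's \<Rightarrow> real) \<Rightarrow> nat \<times> 's \<Rightarrow> real" where
  "nash_map P x = (\<lambda>(i, s).
     (to_profile x i s + gain P (to_profile x) i s) / (1 + (\<Sum>t\<in>S i. gain P (to_profile x) i t)))"

lemma nash_map_in_unit_cube:
  assumes "x \<in> unit_cube (Sigma {..<n} S)"
  shows "nash_map P x \<in> unit_cube (Sigma {..<n} S)"
  unfolding unit_cube_def
proof (intro CollectI ballI)
  fix d assume "d \<in> Sigma {..<n} S"
  then obtain i s where d: "d = (i, s)" "i < n" "s \<in> S i" by blast
  let ?\<sigma> = "to_profile x"
  have mixed: "mixed_strategy (S i) (?\<sigma> i)"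
    using to_profile_mixed[of x] assms \<open>i < n\<close> by (auto simp: unit_cube_def mixed_profile_def)
  have "0 \<le> ?\<sigma> i s" using mixed by (simp add: mixed_strategy_def)
  moreover have "?\<sigma> i s \<le> 1" using mixed_strategy_le_1[OF mixed finite_strategies[OF \<open>i < n\<close>]] .
  moreover have "gain P ?\<sigma> i s \<le> (\<Sum>t\<in>S i. gain P ?\<sigma> i t)"
    using d finite_strategies by (intro member_le_sum gain_nonneg) auto
  ultimately show "nash_map P x d \<in> {0..1}"
    using gain_nonneg[of P ?\<sigma> i s] by (simp add: nash_map_def d(1) divide_le_eq_1)
qed

lemma nash_map_seq_continuous: "cube_seq_continuous (Sigma {..<n} S) (nash_map P)"
  unfolding cube_seq_continuous_def
proof (intro allI impI ballI)
  fix X x d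
  assume "x \<in> unit_cube (Sigma {..<n} S)" and lim: "\<forall>d\<in>Sigma {..<n} S. (\<lambda>k. X k d) \<longlonglongrightarrow> x d"
  then have "(\<lambda>k. to_profile (X k) i s) \<longlonglongrightarrow> to_profile x i s" for i s
    by (intro to_profile_tendsto) (auto simp: unit_cube_def)
  moreover have "1 + (\<Sum>t\<in>S i. gain P (to_profile x) i t) \<noteq> 0" for i
    using sum_nonneg[of "S i" "gain P (to_profile x) i"] gain_nonneg by fastforce
  ultimately show "(\<lambda>k. nash_map P (X k) d) \<longlonglongrightarrow> nash_map P x d"
    unfolding nash_map_def by (cases d) (simp, intro tendsto_intros gain_tendsto)
qed

lemma nash_map_fixed_point_imp_nash_eq:
  assumes x: "x \<in> unit_cube (Sigma {..<n} S)"
    and fixed: "\<And>d. d \<in> Sigma {..<n} S \<Longrightarrow> nash_map P x d = x d"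
  shows "nash_eq n S P (to_profile x)"
proof -
  let ?\<sigma> = "to_profile x"
  have mixed: "mixed_profile n S ?\<sigma>"
    using x by (intro to_profile_mixed) (auto simp: unit_cube_def)
  have "gain P ?\<sigma> i s = 0" if "i < n" "s \<in> S i" for i s
  proof -
    define G where "G = (\<Sum>t\<in>S i. gain P ?\<sigma> i t)"
    have G: "0 \<le> G" unfolding G_def by (intro sum_nonneg gain_nonneg)
    have x_eq: "x (i, t) = (?\<sigma> i t + gain P ?\<sigma> i t) / (1 + G)" if "t \<in> S i" for t
      using fixed[of "(i, t)"] \<open>i < n\<close> that by (simp add: nash_map_def G_def)
    have "row_sum x i = (\<Sum>t\<in>S i. (?\<sigma> i t + gain P ?\<sigma> i t) / (1 + G))"
      unfolding row_sum_def by (rule sum.cong) (simp_all add: x_eq)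
    also have "\<dots> = ((\<Sum>t\<in>S i. ?\<sigma> i t) + G) / (1 + G)"
      unfolding G_def by (simp add: sum_divide_distrib[symmetric] sum.distrib)
    also have "\<dots> = 1"
      using mixed \<open>i < n\<close> G by (simp add: mixed_profile_def mixed_strategy_def)
    finally have "row_sum x i = 1" .
    then have proportional: "?\<sigma> i t * G = gain P ?\<sigma> i t" if "t \<in> S i" for t
      using x_eq[OF that] to_profile_eq[OF _ \<open>i < n\<close> that] G by (simp add: field_simps)
    obtain t where t: "t \<in> S i" "?\<sigma> i t \<noteq> 0" "gain P ?\<sigma> i t = 0"
      using ex_support_without_gain[OF mixed \<open>i < n\<close>] by blast
    then have "G = 0" using proportional[OF t(1)] by simp
    then show ?thesis
      using sum_nonneg_eq_0_iff[OF finite_strategies[OF \<open>i < n\<close>]] gain_nonneg that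
      unfolding G_def by blast
  qed
  then show ?thesis using mixed by (intro no_gain_imp_nash_eq)
qed

theorem nash_eq_exists: "\<exists>\<sigma>. nash_eq n S P \<sigma>"
proof -
  have "finite (Sigma {..<n} S)" using finite_strategies by auto
  then obtain x where "x \<in> unit_cube (Sigma {..<n} S)" "\<forall>d\<in>Sigma {..<n} S. nash_map P x d = x d"
    using unit_cube_fixed_point[OF _ _ nash_map_seq_continuous] nash_map_in_unit_cube by blast
  then show ?thesis using nash_map_fixed_point_imp_nash_eq by blast
qed

end

lemma NME_mixed_profile: "\<sigma> \<in> NME n S mG \<Longrightarrow> mixed_profile n S \<sigma>"
  unfolding NME_def nash_eq_def mixed_profile_def by fastforce

lemma chi_subset_positions: "mixed_profile n S \<sigma> \<Longrightarrow> chi n \<sigma> \<subseteq> positions n S"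
  unfolding chi_def positions_def mixed_profile_def mixed_strategy_def by (auto simp: PiE_iff)

lemma chi_nonempty: "mixed_profile n S \<sigma> \<Longrightarrow> chi n \<sigma> \<noteq> {}"
  unfolding chi_def mixed_profile_def using mixed_strategy_support_nonempty
  by (fastforce simp: PiE_eq_empty_iff)

lemma mono_AD: "mono (AD n S)"
  unfolding mono_def AD_def by blast

lemma AD_star_refl: "mG \<in> AD_star n S {mG}"
  unfolding AD_star_def by (rule UN_I[of 0]) simp_all

lemma AD_star_step:
  assumes "mG' \<in> AD n S {mG}"
  shows "AD_star n S {mG'} \<subseteq> AD_star n S {mG}"
proof -
  have "(AD n S ^^ t) {mG'} \<subseteq> (AD n S ^^ Suc t) {mG}" for t
  proof -
    have "(AD n S ^^ t) {mG'} \<subseteq> (AD n S ^^ t) (AD n S {mG})"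
      using assms by (intro funpow_mono[OF mono_AD]) auto
    then show ?thesis by (simp only: funpow_Suc_right o_apply)
  qed
  then show ?thesis unfolding AD_star_def by blast
qed

definition misinformed_positions :: "nat \<Rightarrow> (nat \<Rightarrow> 's set) \<Rightarrow> 's mgame \<Rightarrow> (nat \<Rightarrow> 's) set" where
  "misinformed_positions n S mG = {v \<in> positions n S. \<exists>i<n. snd mG i v \<noteq> fst mG v}"

lemma adapt_eq_self:
  assumes "\<forall>i<n. snd mG i v = fst mG v"
  shows "adapt n mG v = mG"
proof -
  have "(\<lambda>i. if i < n then (snd mG i)(v := fst mG v) else snd mG i) = snd mG"
    using assms by (intro ext) (simp add: fun_upd_idem)
  then show ?thesis by (simp add: adapt_def)
qed

lemma misinformed_positions_adapt:
  "misinformed_positions n S (adapt n mG v) = misinformed_positions n S mG - {v}"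
  unfolding misinformed_positions_def adapt_def by auto

context finite_game
begin

lemma NME_nonempty: "\<exists>\<sigma>. \<sigma> \<in> NME n S mG"
proof -
  have "\<forall>i. \<exists>\<sigma>. nash_eq n S (snd mG i) \<sigma>" using nash_eq_exists by blast
  then obtain \<tau> where "\<forall>i. nash_eq n S (snd mG i) (\<tau> i)" by (rule choice[THEN exE])
  then have "(\<lambda>i. \<tau> i i) \<in> NME n S mG" unfolding NME_def by blast
  then show ?thesis by blast
qed

lemma ex_AD_step: "\<exists>v\<in>positions n S. adapt n mG v \<in> AD n S {mG}"
proof -
  obtain \<sigma> where \<sigma>: "\<sigma> \<in> NME n S mG" using NME_nonempty by blast
  then obtain v where "v \<in> chi n \<sigma>" using chi_nonempty[OF NME_mixed_profile] by blast
  then show ?thesis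
    using \<sigma> chi_subset_positions[OF NME_mixed_profile[OF \<sigma>]] unfolding AD_def by blast
qed

lemma ex_terminal: "\<exists>mG'\<in>AD_star n S {mG}. mG' \<in> AD n S {mG'}"
proof (induction mG rule: measure_induct_rule[where f = "\<lambda>mG. card (misinformed_positions n S mG)"])
  case (less mG)
  obtain v where v: "v \<in> positions n S" and step: "adapt n mG v \<in> AD n S {mG}"
    using ex_AD_step by blast
  show ?case
  proof (cases "v \<in> misinformed_positions n S mG")
    case True
    have "finite (misinformed_positions n S mG)"
      using finite_positions by (simp add: misinformed_positions_def)
    then have "card (misinformed_positions n S (adapt n mG v)) < card (misinformed_positions n S mG)"
      unfolding misinformed_positions_adapt using True by (rule card_Diff1_less)
    then show ?thesis using less AD_star_step[OF step] by blast
  next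
    case False
    then have "adapt n mG v = mG"
      using v by (intro adapt_eq_self) (auto simp: misinformed_positions_def)
    then show ?thesis using step AD_star_refl by metis
  qed
qed

end

theorem corollary2:
  fixes n :: nat and S :: "nat \<Rightarrow> 's set" and mG :: "'s mgame"
  assumes "\<forall>i<n. finite (S i) \<and> S i \<noteq> {}"
  shows "terminal_set n S mG \<noteq> {}"
proof -
  interpret finite_game n S
    using assms by unfold_locales auto
  show ?thesis using ex_terminal unfolding terminal_set_def by blast
qed

end
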